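(* Let $C$ be a cycle (oriented or not) and let $Ck$ be a diagram obtained from $C$ by adding a new vertex $k$ adjacent to some vertices of $C$. Let $A$ be a quasi-Cartan companion of $Ck$ with $\prod_{\{i,j\}\in C}(-A_{ij})<0$. Suppose $k$ is adjacent to an even number of vertices of $C$, and among them there are two vertices that are not adjacent in $C$. Then $Ck$ contains a cycle $C'$ containing $k$ with $\prod_{\{i,j\}\in C'}(-A_{ij})>0$.
   Context: A diagram is a finite directed graph without loops or 2-cycles with positive integer edge weights such that the product of weights along each cycle is a perfect square; a cycle is an induced subgraph on $r\ge3$ vertices whose underlying graph is a cycle. A quasi-Cartan matrix is an integer matrix $A$ with diagonal entries $2$ such that $DA$ is symmetric for a diagonal $D$ with positive entries (so $\mathrm{sgn}A_{ij}=\mathrm{sgn}A_{ji}$). A quasi-Cartan companion of a diagram $\Gamma$ is a quasi-Cartan $A$ with $|A_{ij}|=|B_{ij}|$ ($i\ne j$) for a skew-symmetrizable $B$ whose diagram ($i\to j$ iff $B_{ij}>0$, weight $|B_{ij}B_{ji}|$) is $\Gamma$. *)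

theory Defs
  imports Complex_Main
begin

text \<open>A diagram on the finite vertex set V is given by a weight function w:
  there is an arrow i \<rightarrow> j iff w i j > 0, and then w i j is its (positive integer) weight.\<close>

definition adj :: "('a \<Rightarrow> 'a \<Rightarrow> nat) \<Rightarrow> 'a \<Rightarrow> 'a \<Rightarrow> bool" where
  "adj w i j \<longleftrightarrow> w i j > 0 \<or> w j i > 0"

definition is_cycle :: "('a \<Rightarrow> 'a \<Rightarrow> nat) \<Rightarrow> 'a set \<Rightarrow> bool" where
  "is_cycle w S \<longleftrightarrow> (\<exists>vs. distinct vs \<and> set vs = S \<and> length vs \<ge> 3 \<and>
     (\<forall>i<length vs. \<forall>j<length vs.
        adj w (vs ! i) (vs ! j) \<longleftrightarrow>
          (j = Suc i mod length vs \<or> i = Suc j mod length vs)))"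

definition arrows_in :: "('a \<Rightarrow> 'a \<Rightarrow> nat) \<Rightarrow> 'a set \<Rightarrow> ('a \<times> 'a) set" where
  "arrows_in w S = {(i, j). i \<in> S \<and> j \<in> S \<and> w i j > 0}"

definition is_diagram :: "'a set \<Rightarrow> ('a \<Rightarrow> 'a \<Rightarrow> nat) \<Rightarrow> bool" where
  "is_diagram V w \<longleftrightarrow> finite V \<and>
     (\<forall>i j. w i j > 0 \<longrightarrow> i \<in> V \<and> j \<in> V) \<and>
     (\<forall>i. w i i = 0) \<and>
     (\<forall>i j. \<not> (w i j > 0 \<and> w j i > 0)) \<and>
     (\<forall>S \<subseteq> V. is_cycle w S \<longrightarrow> (\<exists>m::nat. (\<Prod>(i, j)\<in>arrows_in w S. w i j) = m ^ 2))"

definition skew_symmetrizable :: "'a set \<Rightarrow> ('a \<Rightarrow> 'a \<Rightarrow> int) \<Rightarrow> bool" where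
  "skew_symmetrizable V B \<longleftrightarrow> (\<exists>d :: 'a \<Rightarrow> real. (\<forall>i\<in>V. d i > 0) \<and>
     (\<forall>i\<in>V. \<forall>j\<in>V. d i * of_int (B i j) = - (d j * of_int (B j i))))"

definition diagram_of :: "'a set \<Rightarrow> ('a \<Rightarrow> 'a \<Rightarrow> int) \<Rightarrow> 'a \<Rightarrow> 'a \<Rightarrow> nat" where
  "diagram_of V B i j = (if i \<in> V \<and> j \<in> V \<and> B i j > 0 then nat \<bar>B i j * B j i\<bar> else 0)"

definition quasi_cartan :: "'a set \<Rightarrow> ('a \<Rightarrow> 'a \<Rightarrow> int) \<Rightarrow> bool" where
  "quasi_cartan V A \<longleftrightarrow> (\<forall>i\<in>V. A i i = 2) \<and>
     (\<exists>d :: 'a \<Rightarrow> real. (\<forall>i\<in>V. d i > 0) \<and>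
        (\<forall>i\<in>V. \<forall>j\<in>V. d i * of_int (A i j) = d j * of_int (A j i)))"

definition quasi_cartan_companion ::
    "'a set \<Rightarrow> ('a \<Rightarrow> 'a \<Rightarrow> nat) \<Rightarrow> ('a \<Rightarrow> 'a \<Rightarrow> int) \<Rightarrow> bool" where
  "quasi_cartan_companion V w A \<longleftrightarrow> quasi_cartan V A \<and>
     (\<exists>B. skew_symmetrizable V B \<and> diagram_of V B = w \<and>
          (\<forall>i\<in>V. \<forall>j\<in>V. i \<noteq> j \<longrightarrow> \<bar>A i j\<bar> = \<bar>B i j\<bar>))"

text \<open>The product over the edges {i,j} of the cycle S of (- A i j), each edge taken in
  the orientation of its arrow (the sign does not depend on this choice).\<close>
definition cycle_prod :: "('a \<Rightarrow> 'a \<Rightarrow> nat) \<Rightarrow> ('a \<Rightarrow> 'a \<Rightarrow> int) \<Rightarrow> 'a set \<Rightarrow> int" where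
  "cycle_prod w A S = (\<Prod>(i, j)\<in>arrows_in w S. - A i j)"

end

theory Submission
  imports Defs
begin

text \<open>
  The sign of the product of the entries -A i j along a cycle
  does not depend on the orientation of its edges, because A i j and A j i have the same sign.

  Let the neighbours of k on C be v_(p_1), ..., v_(p_M) in cyclic order, M even.
  For consecutive neighbours p_t, p_(t+1) the arc of C from v_(p_t) to v_(p_(t+1)) together with
  k is an induced cycle C_t; the gap condition (the arc misses at least one edge of C) holds
  automatically when M > 2, and for M = 2 it is exactly the hypothesis that the two neighbours
  are not adjacent in C. Each edge of C lies in exactly one C_t and each edge {k, v_(p_t)} lies
  in exactly two of them, so the product of the signs of all C_t is the sign of C, namely -1.
  Since M is even, not all C_t can have sign -1, and no sign is 0 because A is nonzero on
  edges; hence some C_t has positive sign.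
\<close>

section \<open>Residues, signs and products\<close>

lemma mod_eq_close:
  fixes x y n :: nat
  assumes "x mod n = y mod n" "x < y + n" "y < x + n"
  shows "x = y"
proof (cases "x \<le> y")
  case True
  then obtain s where "y = x + n * s" using mod_eq_nat2E assms(1) by blast
  then show ?thesis using assms(3) by (cases s) auto
next
  case False
  then obtain s where "x = y + n * s" using mod_eq_nat1E assms(1) by (meson nat_le_linear)
  then show ?thesis using assms(2) by (cases s) auto
qed

lemma sgn_prod:
  fixes f :: "'b \<Rightarrow> 'c::linordered_idom"
  shows "sgn (prod f S) = (\<Prod>x\<in>S. sgn (f x))"
  by (induction S rule: infinite_finite_induct) (auto simp: sgn_mult)

lemma prod_periodic_window:
  fixes s :: "nat \<Rightarrow> 'b::comm_monoid_mult"
  assumes periodic: "\<And>j. s (j + n) = s j"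
  shows "prod s {p..<p + n} = prod s {..<n}"
proof (cases "n = 0")
  case False
  show ?thesis
  proof (induction p)
    case 0
    then show ?case by (simp add: atLeast0LessThan)
  next
    case (Suc p)
    have "prod s {Suc p..<Suc p + n} = prod s {Suc p..<p + n} * s (p + n)"
      using False by (simp add: prod.atLeastLessThan_Suc)
    also have "\<dots> = s p * prod s {Suc p..<p + n}"
      using periodic[of p] by (simp add: mult.commute)
    also have "\<dots> = prod s {p..<p + n}"
      using False by (simp add: prod.atLeast_Suc_lessThan)
    finally show ?case using Suc by simp
  qed
qed simp

lemma prod_telescope_ivl:
  fixes q :: "nat \<Rightarrow> nat" and s :: "nat \<Rightarrow> 'b::comm_monoid_mult"
  assumes "mono q"
  shows "(\<Prod>t<M. prod s {q t..<q (Suc t)}) = prod s {q 0..<q M}"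
proof (induction M)
  case (Suc M)
  have "q 0 \<le> q M" "q M \<le> q (Suc M)" using assms by (simp_all add: monoD)
  then show ?case
    using Suc prod.atLeastLessThan_concat[of "q 0" "q M" "q (Suc M)" s] by simp
qed simp

lemma arc_factors_telescope:
  fixes q :: "nat \<Rightarrow> nat" and s g :: "nat \<Rightarrow> 'b::comm_monoid_mult"
  assumes mono: "mono q"
    and involutive: "\<And>t. t < M \<Longrightarrow> g (q t) * g (q t) = 1"
    and closed: "g (q M) = g (q 0)"
  shows "(\<Prod>t<M. g (q t) * prod s {q t..<q (Suc t)} * g (q (Suc t))) = prod s {q 0..<q M}"
proof (cases "M = 0")
  case False
  define G where "G = (\<Prod>t<M. g (q t))"
  have "g (q 0) * (\<Prod>t<M. g (q (Suc t))) = G * g (q 0)"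
    using prod.lessThan_Suc_shift[of "\<lambda>t. g (q t)" M] prod.lessThan_Suc[of "\<lambda>t. g (q t)" M]
      closed unfolding G_def by simp
  then have "g (q 0) * g (q 0) * (\<Prod>t<M. g (q (Suc t))) = g (q 0) * g (q 0) * G"
    by (metis mult.assoc mult.commute)
  then have shifted: "(\<Prod>t<M. g (q (Suc t))) = G"
    using involutive[of 0] False by simp
  have square: "G * G = 1"
    unfolding G_def prod.distrib[symmetric] using involutive by simp
  have "(\<Prod>t<M. g (q t) * prod s {q t..<q (Suc t)} * g (q (Suc t))) =
      G * (\<Prod>t<M. prod s {q t..<q (Suc t)}) * (\<Prod>t<M. g (q (Suc t)))"
    unfolding G_def prod.distrib ..
  also have "\<dots> = (G * G) * prod s {q 0..<q M}"
    unfolding shifted prod_telescope_ivl[OF mono] by (simp only: mult.assoc mult.commute)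
  finally show ?thesis unfolding square by simp
qed simp

lemma even_sign_product:
  fixes \<sigma> :: "nat \<Rightarrow> int"
  assumes "even M" and prod: "(\<Prod>t<M. \<sigma> t) = -1"
    and signs: "\<And>t. t < M \<Longrightarrow> \<sigma> t \<in> {-1, 0, 1}"
  shows "\<exists>t<M. \<sigma> t = 1"
proof (rule ccontr)
  assume "\<not> ?thesis"
  moreover have "\<sigma> t \<noteq> 0" if "t < M" for t using prod that prod_zero[of "{..<M}" \<sigma>] by auto
  ultimately have "\<sigma> t = -1" if "t < M" for t using signs that by blast
  then have "(\<Prod>t<M. \<sigma> t) = (-1) ^ M" by simp
  then show False using prod \<open>even M\<close> by simp
qed

section \<open>Sign symmetry of quasi-Cartan companions\<close>

text \<open>Symmetrizability by a positive diagonal forces A i j and A j i to have the same sign.\<close>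

lemma quasi_cartan_sgn_sym:
  assumes "quasi_cartan V A" "i \<in> V" "j \<in> V"
  shows "sgn (A i j) = sgn (A j i)"
proof -
  obtain d :: "_ \<Rightarrow> real" where d: "d i > 0" "d j > 0" "d i * of_int (A i j) = d j * of_int (A j i)"
    using assms unfolding quasi_cartan_def by blast
  then have "(0 < A i j \<longleftrightarrow> 0 < A j i) \<and> (A i j < 0 \<longleftrightarrow> A j i < 0)"
    by (metis d(1,2) of_int_0_less_iff of_int_less_0_iff zero_less_mult_iff mult_less_0_iff
        order_less_asym)
  then show ?thesis by (auto simp: sgn_if)
qed

lemma skew_symmetrizable_zero_iff:
  assumes "skew_symmetrizable V B" "i \<in> V" "j \<in> V"
  shows "B i j = 0 \<longleftrightarrow> B j i = 0"
proof -
  obtain d :: "_ \<Rightarrow> real" where d: "d i > 0" "d j > 0" "d i * of_int (B i j) = - (d j * of_int (B j i))"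
    using assms unfolding skew_symmetrizable_def by blast
  then show ?thesis by auto
qed

lemma skew_symmetrizable_diag_zero:
  assumes "skew_symmetrizable V B" "i \<in> V"
  shows "B i i = 0"
proof -
  obtain d :: "_ \<Rightarrow> real" where "d i > 0" "d i * of_int (B i i) = - (d i * of_int (B i i))"
    using assms unfolding skew_symmetrizable_def by blast
  then show ?thesis by simp
qed

lemma companion_adj_nonzero:
  assumes comp: "quasi_cartan_companion V w A" and ij: "i \<in> V" "j \<in> V" "adj w i j"
  shows "A i j \<noteq> 0"
proof -
  obtain B where B: "skew_symmetrizable V B" "diagram_of V B = w"
      and AB: "\<forall>i\<in>V. \<forall>j\<in>V. i \<noteq> j \<longrightarrow> \<bar>A i j\<bar> = \<bar>B i j\<bar>"
    using comp unfolding quasi_cartan_companion_def by blast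
  have "B i j > 0 \<or> B j i > 0"
    using ij B(2) unfolding adj_def diagram_of_def by (auto split: if_splits)
  then have Bij: "B i j \<noteq> 0"
    using skew_symmetrizable_zero_iff[OF B(1) ij(1,2)] by auto
  have "i \<noteq> j"
    using Bij skew_symmetrizable_diag_zero[OF B(1) ij(1)] by auto
  then show ?thesis using AB ij Bij by fastforce
qed

section \<open>Induced cycles as cyclic enumerations\<close>

lemma adj_sym: "adj w x y \<longleftrightarrow> adj w y x"
  unfolding adj_def by auto

definition cycle_enum :: "('a \<Rightarrow> 'a \<Rightarrow> nat) \<Rightarrow> 'a list \<Rightarrow> bool" where
  "cycle_enum w vs \<longleftrightarrow> distinct vs \<and> length vs \<ge> 3 \<and>
     (\<forall>i<length vs. \<forall>j<length vs. adj w (vs ! i) (vs ! j) \<longleftrightarrow>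
        (j = Suc i mod length vs \<or> i = Suc j mod length vs))"

lemma is_cycle_iff_enum: "is_cycle w S \<longleftrightarrow> (\<exists>vs. cycle_enum w vs \<and> set vs = S)"
  unfolding is_cycle_def cycle_enum_def by blast

lemma cycle_enum_nth_mod:
  assumes "cycle_enum w vs"
  shows "vs ! (x mod length vs) \<in> set vs"
proof -
  have "length vs > 0" using assms unfolding cycle_enum_def by linarith
  then show ?thesis by simp
qed

lemma cycle_enum_consecutive:
  assumes vs: "cycle_enum w vs"
  shows "vs ! (x mod length vs) \<noteq> vs ! (Suc x mod length vs)"
    and "adj w (vs ! (x mod length vs)) (vs ! (Suc x mod length vs))"
proof -
  let ?n = "length vs"
  have n3: "?n \<ge> 3" and dist: "distinct vs"
    and adjc: "\<And>i j. i < ?n \<Longrightarrow> j < ?n \<Longrightarrow>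
      adj w (vs ! i) (vs ! j) \<longleftrightarrow> (j = Suc i mod ?n \<or> i = Suc j mod ?n)"
    using vs unfolding cycle_enum_def by auto
  have "?n > 0" using n3 by linarith
  then have lt: "x mod ?n < ?n" "Suc x mod ?n < ?n" by simp_all
  have "x mod ?n \<noteq> Suc x mod ?n" using n3 by (simp add: mod_Suc)
  then show "vs ! (x mod ?n) \<noteq> vs ! (Suc x mod ?n)" using dist lt nth_eq_iff_index_eq by blast
  show "adj w (vs ! (x mod ?n)) (vs ! (Suc x mod ?n))" using adjc[OF lt] by (simp add: mod_Suc_eq)
qed

definition cycle_arrow :: "('a \<Rightarrow> 'a \<Rightarrow> nat) \<Rightarrow> 'a list \<Rightarrow> nat \<Rightarrow> 'a \<times> 'a" where
  "cycle_arrow w vs i =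
     (let x = vs ! i; y = vs ! (Suc i mod length vs) in if 0 < w x y then (x, y) else (y, x))"

lemma cycle_arrow_inj:
  assumes vs: "cycle_enum w vs"
  shows "inj_on (cycle_arrow w vs) {..<length vs}"
proof (rule inj_onI)
  define L where "L = length vs"
  fix i j assume "i \<in> {..<length vs}" "j \<in> {..<length vs}"
    and e: "cycle_arrow w vs i = cycle_arrow w vs j"
  then have i: "i < L" and j: "j < L" unfolding L_def by auto
  have L3: "L \<ge> 3" and dist: "distinct vs" using vs unfolding cycle_enum_def L_def by auto
  have sucL: "Suc x mod L < L" for x using L3 by simp
  have eqv: "vs ! x = vs ! y \<longleftrightarrow> x = y" if "x < L" "y < L" for x y
    using dist that L_def nth_eq_iff_index_eq by blast
  have arrow: "cycle_arrow w vs x = (vs ! x, vs ! (Suc x mod L)) \<or>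
      cycle_arrow w vs x = (vs ! (Suc x mod L), vs ! x)" for x
    unfolding cycle_arrow_def L_def Let_def by auto
  have not_both: "\<not> (i = Suc j mod L \<and> j = Suc i mod L)"
    using i j L3 by (auto simp: mod_Suc split: if_splits)
  from e arrow[of i] arrow[of j] have "vs ! i = vs ! j \<or>
      (vs ! i = vs ! (Suc j mod L) \<and> vs ! (Suc i mod L) = vs ! j)"
    by auto
  then show "i = j"
    using eqv[of i j] eqv[of i "Suc j mod L"] eqv[of "Suc i mod L" j] i j sucL not_both by auto
qed

text \<open>Since the diagram has no 2-cycles, the edges of the enumeration are exactly the arrows of
  the cycle.\<close>

lemma cycle_arrow_image:
  assumes no2: "\<forall>i j. \<not> (w i j > 0 \<and> w j i > 0)" and vs: "cycle_enum w vs"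
  shows "cycle_arrow w vs ` {..<length vs} = arrows_in w (set vs)"
proof
  define L where "L = length vs"
  have L3: "L \<ge> 3"
    and adjc: "\<And>i j. i < L \<Longrightarrow> j < L \<Longrightarrow>
      adj w (vs ! i) (vs ! j) \<longleftrightarrow> (j = Suc i mod L \<or> i = Suc j mod L)"
    using vs unfolding cycle_enum_def L_def by auto
  have sucL: "Suc i mod L < L" for i using L3 by simp
  show "cycle_arrow w vs ` {..<length vs} \<subseteq> arrows_in w (set vs)"
  proof
    fix x assume "x \<in> cycle_arrow w vs ` {..<length vs}"
    then obtain i where i: "i < L" "x = cycle_arrow w vs i" unfolding L_def by auto
    have "adj w (vs ! i) (vs ! (Suc i mod L))" using adjc[OF i(1) sucL] by simp
    then show "x \<in> arrows_in w (set vs)"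
      using i sucL[of i] unfolding cycle_arrow_def arrows_in_def adj_def L_def Let_def by auto
  qed
  show "arrows_in w (set vs) \<subseteq> cycle_arrow w vs ` {..<length vs}"
  proof
    fix x assume "x \<in> arrows_in w (set vs)"
    then obtain i j where x: "x = (vs ! i, vs ! j)" "i < L" "j < L" "w (vs ! i) (vs ! j) > 0"
      unfolding arrows_in_def L_def by (auto simp: in_set_conv_nth)
    then have "j = Suc i mod L \<or> i = Suc j mod L" using adjc unfolding adj_def by blast
    moreover have "\<not> w (vs ! j) (vs ! i) > 0" using no2 x(4) by (metis gr_zeroI)
    ultimately have "cycle_arrow w vs i = x \<or> cycle_arrow w vs j = x"
      using x unfolding cycle_arrow_def L_def Let_def by auto
    then show "x \<in> cycle_arrow w vs ` {..<length vs}" using x(2,3) unfolding L_def by blast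
  qed
qed

definition cyclic_sign :: "('a \<Rightarrow> 'a \<Rightarrow> int) \<Rightarrow> 'a list \<Rightarrow> int" where
  "cyclic_sign A vs = (\<Prod>i<length vs. sgn (- A (vs ! i) (vs ! (Suc i mod length vs))))"

lemma cyclic_sign_range: "cyclic_sign A vs \<in> {-1, 0, 1}"
  unfolding cyclic_sign_def sgn_prod[symmetric] by (simp add: sgn_if)

lemma cycle_prod_sgn:
  assumes no2: "\<forall>i j. \<not> (w i j > 0 \<and> w j i > 0)" and vs: "cycle_enum w vs"
    and sym: "\<And>x y. x \<in> set vs \<Longrightarrow> y \<in> set vs \<Longrightarrow> sgn (A x y) = sgn (A y x)"
  shows "sgn (cycle_prod w A (set vs)) = cyclic_sign A vs"
proof -
  let ?f = "\<lambda>(x, y). sgn (- A x y)"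
  have "sgn (cycle_prod w A (set vs)) = (\<Prod>p\<in>arrows_in w (set vs). ?f p)"
    unfolding cycle_prod_def sgn_prod by (simp add: case_prod_beta)
  also have "\<dots> = (\<Prod>i<length vs. ?f (cycle_arrow w vs i))"
    using prod.reindex_bij_betw[OF bij_betw_imageI[OF cycle_arrow_inj[OF vs]
        cycle_arrow_image[OF no2 vs]], of ?f] by (simp only:)
  also have "\<dots> = cyclic_sign A vs"
    unfolding cyclic_sign_def
  proof (rule prod.cong)
    fix i assume "i \<in> {..<length vs}"
    then have "vs ! i \<in> set vs" "vs ! (Suc i mod length vs) \<in> set vs"
      by (auto intro!: nth_mem mod_less_divisor)
    then show "?f (cycle_arrow w vs i) = sgn (- A (vs ! i) (vs ! (Suc i mod length vs)))"
      using sym unfolding cycle_arrow_def Let_def by (simp add: sgn_minus)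
  qed simp
  finally show ?thesis .
qed

section \<open>Arcs of a cycle closed by an outside vertex\<close>

definition arc :: "'a list \<Rightarrow> nat \<Rightarrow> nat \<Rightarrow> 'a list" where
  "arc vs a b = map (\<lambda>j. vs ! (j mod length vs)) [a..<Suc b]"

lemma length_arc: "length (arc vs a b) = Suc b - a"
  unfolding arc_def by (simp del: upt_Suc)

lemma nth_arc: "i \<le> b - a \<Longrightarrow> a \<le> b \<Longrightarrow> arc vs a b ! i = vs ! ((a + i) mod length vs)"
proof -
  assume "i \<le> b - a" "a \<le> b"
  then have "i < length [a..<Suc b]" "a + i < Suc b" by (simp_all del: upt_Suc)
  then show ?thesis unfolding arc_def by (simp del: upt_Suc add: nth_upt)
qed

lemma set_arc_subset: "vs \<noteq> [] \<Longrightarrow> set (arc vs a b) \<subseteq> set vs"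
  unfolding arc_def by auto

text \<open>An arc missing at least one edge of the cycle is an induced path.\<close>

lemma arc_adj:
  assumes vs: "cycle_enum w vs" and short: "b + 2 \<le> a + length vs"
    and xy: "a \<le> x" "x \<le> b" "a \<le> y" "y \<le> b"
  shows "adj w (vs ! (x mod length vs)) (vs ! (y mod length vs)) \<longleftrightarrow> y = Suc x \<or> x = Suc y"
proof -
  let ?n = "length vs"
  have n0: "?n > 0" using vs unfolding cycle_enum_def by linarith
  have "adj w (vs ! (x mod ?n)) (vs ! (y mod ?n)) \<longleftrightarrow>
      (y mod ?n = Suc x mod ?n \<or> x mod ?n = Suc y mod ?n)"
    using vs n0 unfolding cycle_enum_def by (simp add: mod_Suc_eq)
  also have "(y mod ?n = Suc x mod ?n) \<longleftrightarrow> y = Suc x"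
    using mod_eq_close[of y ?n "Suc x"] xy short by auto
  also have "(x mod ?n = Suc y mod ?n) \<longleftrightarrow> x = Suc y"
    using mod_eq_close[of x ?n "Suc y"] xy short by auto
  finally show ?thesis .
qed

lemma arc_cycle:
  assumes vs: "cycle_enum w vs" and k: "k \<notin> set vs" "w k k = 0"
    and ab: "a < b" "b + 2 \<le> a + length vs"
    and ends: "adj w k (vs ! (a mod length vs))" "adj w k (vs ! (b mod length vs))"
    and inner: "\<And>x. a < x \<Longrightarrow> x < b \<Longrightarrow> \<not> adj w k (vs ! (x mod length vs))"
  shows "cycle_enum w (k # arc vs a b)"
proof -
  let ?n = "length vs"
  define ws where "ws = k # arc vs a b"
  define m where "m = b - a"
  have len: "length ws = m + 2" unfolding ws_def m_def using ab by (simp add: length_arc)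
  have ws_Suc: "ws ! Suc i = vs ! ((a + i) mod ?n)" if "i \<le> m" for i
    using that ab nth_arc[of i b a vs] unfolding ws_def m_def by simp
  have k_adj: "adj w k (ws ! Suc i) \<longleftrightarrow> i = 0 \<or> i = m" if "i \<le> m" for i
    using ends inner[of "a + i"] that ab m_def unfolding ws_Suc[OF that]
    by (cases "i = 0"; cases "i = m") auto
  have inner_adj: "adj w (ws ! Suc i) (ws ! Suc j) \<longleftrightarrow> j = Suc i \<or> i = Suc j"
    if "i \<le> m" "j \<le> m" for i j
    using arc_adj[OF vs ab(2), of "a + i" "a + j"] that ab(1) unfolding ws_Suc[OF that(1)] ws_Suc[OF that(2)] m_def
    by auto
  have "inj_on (\<lambda>j. vs ! (j mod ?n)) {a..<Suc b}"
  proof (rule inj_onI)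
    fix x y assume "x \<in> {a..<Suc b}" "y \<in> {a..<Suc b}" "vs ! (x mod ?n) = vs ! (y mod ?n)"
    moreover have "distinct vs" "?n > 0" using vs unfolding cycle_enum_def by auto
    ultimately show "x = y"
      using mod_eq_close[of x ?n y] ab nth_eq_iff_index_eq by fastforce
  qed
  moreover have "set (arc vs a b) \<subseteq> set vs"
    using cycle_enum_nth_mod[OF vs] unfolding arc_def by auto
  ultimately have dist: "distinct ws"
    using k(1) unfolding ws_def arc_def by (auto simp del: upt_Suc simp add: distinct_map)
  have mod_len: "x mod (m + 2) = (if x = m + 2 then 0 else x)" if "x \<le> m + 2" for x
    using that by auto
  have "adj w (ws ! i) (ws ! j) \<longleftrightarrow> (j = Suc i mod (m + 2) \<or> i = Suc j mod (m + 2))"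
    if "i < m + 2" "j < m + 2" for i j
  proof (cases i; cases j)
    assume "i = 0" "j = 0"
    then show ?thesis using k(2) unfolding ws_def adj_def by simp
  next
    fix j' assume "i = 0" "j = Suc j'"
    then show ?thesis using k_adj[of j'] that mod_len[of "Suc j"] unfolding ws_def by auto
  next
    fix i' assume "i = Suc i'" "j = 0"
    then show ?thesis
      using k_adj[of i'] that mod_len[of "Suc i"] adj_sym[of w k] unfolding ws_def by auto
  next
    fix i' j' assume "i = Suc i'" "j = Suc j'"
    then show ?thesis using inner_adj[of i' j'] that mod_len[of "Suc i"] mod_len[of "Suc j"] by auto
  qed
  then show ?thesis using dist len ab(1) m_def unfolding cycle_enum_def ws_def by auto
qed

lemma cyclic_sign_cons_arc:
  assumes ab: "a \<le> b"
  shows "cyclic_sign A (k # arc vs a b) =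
    sgn (- A k (vs ! (a mod length vs))) *
    (\<Prod>j\<in>{a..<b}. sgn (- A (vs ! (j mod length vs)) (vs ! (Suc j mod length vs)))) *
    sgn (- A (vs ! (b mod length vs)) k)"
proof -
  let ?n = "length vs"
  let ?h = "\<lambda>x y. sgn (- A x y)"
  define ws where "ws = k # arc vs a b"
  define m where "m = b - a"
  have len: "length ws = Suc (Suc m)" unfolding ws_def m_def using ab by (simp add: length_arc)
  have ws_Suc: "ws ! Suc i = vs ! ((a + i) mod ?n)" if "i \<le> m" for i
    using that ab nth_arc[of i b a vs] unfolding ws_def m_def by simp
  have middle: "(\<Prod>i<m. ?h (ws ! Suc i) (ws ! (Suc (Suc i) mod Suc (Suc m)))) =
      (\<Prod>j\<in>{a..<b}. ?h (vs ! (j mod ?n)) (vs ! (Suc j mod ?n)))"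
    unfolding prod.atLeastLessThan_shift_0[of _ a b] m_def[symmetric] atLeast0LessThan
    by (rule prod.cong) (simp_all add: ws_Suc)
  have "cyclic_sign A ws = (\<Prod>i<Suc (Suc m). ?h (ws ! i) (ws ! (Suc i mod Suc (Suc m))))"
    unfolding cyclic_sign_def len ..
  also have "\<dots> = ?h k (ws ! 1) * (\<Prod>i<m. ?h (ws ! Suc i) (ws ! (Suc (Suc i) mod Suc (Suc m)))) *
      ?h (ws ! Suc m) k"
    unfolding prod.lessThan_Suc[of _ "Suc m"] prod.lessThan_Suc_shift[of _ m] by (simp add: ws_def)
  finally show ?thesis
    unfolding middle ws_def[symmetric] using ws_Suc[of 0] ws_Suc[of m] ab m_def by simp
qed

section \<open>The neighbours of the outside vertex\<close>

lemma periodic_enumeration: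
  fixes N :: "nat set" and n :: nat
  assumes N: "N \<subseteq> {..<n}" "N \<noteq> {}"
  obtains q where "strict_mono q" "\<And>t. q (t + card N) = q t + n" "range q = {x. x mod n \<in> N}"
proof -
  have fin: "finite N" using N(1) finite_subset by blast
  define ps where "ps = sorted_list_of_set N"
  define M where "M = card N"
  have len: "length ps = M" and set_ps: "set ps = N" and sorted: "sorted_wrt (<) ps"
    unfolding ps_def M_def using fin by simp_all
  have M0: "M > 0" using fin N(2) unfolding M_def by (simp add: card_gt_0_iff)
  have ps_less: "ps ! i < n" if "i < M" for i using that N(1) set_ps len nth_mem by blast
  define q where "q t = ps ! (t mod M) + t div M * n" for t
  have "q t < q (Suc t)" for t
  proof (cases "Suc (t mod M) = M")
    case True
    then have "ps ! (t mod M) < n" using ps_less by simp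
    then show ?thesis using True unfolding q_def by (simp add: mod_Suc div_Suc)
  next
    case False
    then have "Suc (t mod M) < M" using M0 mod_less_divisor[of M t] by linarith
    then have "ps ! (t mod M) < ps ! Suc (t mod M)" using sorted len sorted_wrt_nth_less by blast
    then show ?thesis using False unfolding q_def by (simp add: mod_Suc div_Suc)
  qed
  then have "strict_mono q" by (simp add: strict_mono_Suc_iff)
  moreover have "q (t + card N) = q t + n" for t
    using M0 unfolding q_def M_def[symmetric] by simp
  moreover have "range q = {x. x mod n \<in> N}"
  proof (intro set_eqI iffI)
    fix x assume "x \<in> range q"
    then obtain t where "x = q t" by blast
    then have "x mod n = ps ! (t mod M)" using ps_less[of "t mod M"] M0 unfolding q_def by simp
    then show "x \<in> {x. x mod n \<in> N}" using set_ps len M0 by auto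
  next
    fix x assume "x \<in> {x. x mod n \<in> N}"
    then obtain j where j: "j < M" "ps ! j = x mod n" using set_ps len by (auto simp: in_set_conv_nth)
    have "q (x div n * M + j) = x" using j unfolding q_def by simp
    then show "x \<in> range q" by (metis rangeI)
  qed
  ultimately show ?thesis using that by blast
qed

lemma neighbour_enumeration:
  assumes vs: "cycle_enum w vs" and nb: "\<exists>v\<in>set vs. adj w k v"
  obtains q where "strict_mono q" "\<And>t. q (t + card {v \<in> set vs. adj w k v}) = q t + length vs"
    "range q = {x. adj w k (vs ! (x mod length vs))}"
proof -
  let ?n = "length vs"
  define N where "N = {i. i < ?n \<and> adj w k (vs ! i)}"
  have n0: "?n > 0" using vs unfolding cycle_enum_def by linarith
  have "{v \<in> set vs. adj w k v} = (!) vs ` N" unfolding N_def by (auto simp: in_set_conv_nth)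
  moreover have "inj_on ((!) vs) N"
    using vs unfolding N_def cycle_enum_def by (auto intro: inj_on_nth)
  ultimately have card: "card {v \<in> set vs. adj w k v} = card N" by (simp add: card_image)
  have "N \<subseteq> {..<?n}" "N \<noteq> {}" using nb unfolding N_def by (auto simp: in_set_conv_nth)
  then obtain q where q: "strict_mono q" "\<And>t. q (t + card N) = q t + ?n"
      "range q = {x. x mod ?n \<in> N}"
    by (rule periodic_enumeration) auto
  show ?thesis
  proof (rule that)
    show "strict_mono q" by (fact q(1))
    show "q (t + card {v \<in> set vs. adj w k v}) = q t + ?n" for t using q(2) card by simp
    show "range q = {x. adj w k (vs ! (x mod ?n))}" using q(3) n0 unfolding N_def by simp
  qed
qed

text \<open>Consecutive neighbours of k are at cyclic distance at most n - 2, so the arc between them misses an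
  edge of the cycle: for at least three neighbours this is automatic, for exactly two it is the
  hypothesis that two neighbours of k are non-adjacent.\<close>

lemma neighbour_gap:
  assumes vs: "cycle_enum w vs" and q: "strict_mono q"
    and range: "range q = {x. adj w k (vs ! (x mod length vs))}"
    and period: "\<And>t. q (t + M) = q t + length vs"
    and M: "M = card {v \<in> set vs. adj w k v}"
    and nonadj: "\<exists>u\<in>set vs. \<exists>v\<in>set vs. adj w k u \<and> adj w k v \<and> u \<noteq> v \<and> \<not> adj w u v"
  shows "q (Suc t) + 2 \<le> q t + length vs"
proof -
  let ?n = "length vs"
  let ?S = "{v \<in> set vs. adj w k v}"
  obtain u v where uv: "u \<in> ?S" "v \<in> ?S" "u \<noteq> v" "\<not> adj w u v" using nonadj by blast
  have "card {u, v} \<le> card ?S" using uv by (intro card_mono) auto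
  then have M2: "M \<ge> 2" using uv(3) M by simp
  have step: "q x + 1 \<le> q (Suc x)" for x using q by (simp add: strict_mono_Suc_iff Suc_le_eq)
  show ?thesis
  proof (cases "M = 2")
    case False
    then have "t + 3 \<le> t + M" using M2 by simp
    then have "q (t + 3) \<le> q (t + M)" using q by (simp add: strict_mono_less_eq)
    moreover have "q (Suc t) + 2 \<le> q (t + 3)"
      using step[of "Suc t"] step[of "Suc (Suc t)"] by (simp add: numeral_3_eq_3)
    ultimately show ?thesis using period[of t] by simp
  next
    case True
    show ?thesis
    proof (rule ccontr)
      assume "\<not> ?thesis"
      moreover have "q (Suc t) < q (Suc (Suc t))" using q by (simp add: strict_mono_Suc_iff)
      ultimately have consecutive: "q (Suc (Suc t)) = Suc (q (Suc t))" using period[of t] True by simp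
      let ?a = "vs ! (q (Suc t) mod ?n)" and ?b = "vs ! (Suc (q (Suc t)) mod ?n)"
      have ab: "?a \<in> ?S" "?b \<in> ?S"
        using range cycle_enum_nth_mod[OF vs] consecutive by (auto simp: set_eq_iff) (metis rangeI)+
      obtain x y where "?S = {x, y}" using True M card_2_iff[of ?S] by auto
      then have "?S = {?a, ?b}" using ab cycle_enum_consecutive(1)[OF vs, of "q (Suc t)"] by auto
      then have "adj w u v \<or> adj w v u"
        using uv cycle_enum_consecutive(2)[OF vs] by auto
      then show False using uv(4) adj_sym by metis
    qed
  qed
qed

lemma neighbour_arc_cycle:
  assumes vs: "cycle_enum w vs" and k: "k \<notin> set vs" "w k k = 0"
    and q: "strict_mono q" and range: "range q = {x. adj w k (vs ! (x mod length vs))}"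
    and gap: "q (Suc t) + 2 \<le> q t + length vs"
  shows "cycle_enum w (k # arc vs (q t) (q (Suc t)))"
proof (rule arc_cycle[OF vs k _ gap])
  show "q t < q (Suc t)" using q by (simp add: strict_mono_Suc_iff)
  show "adj w k (vs ! (q t mod length vs))" "adj w k (vs ! (q (Suc t) mod length vs))"
    using range by (auto simp: set_eq_iff)
  show "\<not> adj w k (vs ! (x mod length vs))" if "q t < x" "x < q (Suc t)" for x
  proof
    assume "adj w k (vs ! (x mod length vs))"
    then obtain j where "x = q j" using range by (auto simp: set_eq_iff)
    then show False using that q by (simp add: strict_mono_less)
  qed
qed

text \<open>The product of the signs of all these cycles is the sign of the original cycle: each edge at k
  occurs twice and each edge of the cycle once.\<close>

lemma arc_signs_product:
  assumes vs: "vs \<noteq> []" and q: "strict_mono q"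
    and period: "\<And>t. q (t + M) = q t + length vs"
    and sym: "\<And>x y. x \<in> insert k (set vs) \<Longrightarrow> y \<in> insert k (set vs) \<Longrightarrow>
      sgn (A x y) = sgn (A y x)"
    and nonzero: "\<And>t. A k (vs ! (q t mod length vs)) \<noteq> 0"
  shows "(\<Prod>t<M. cyclic_sign A (k # arc vs (q t) (q (Suc t)))) = cyclic_sign A vs"
proof -
  let ?n = "length vs"
  define s where "s j = sgn (- A (vs ! (j mod ?n)) (vs ! (Suc j mod ?n)))" for j
  define g where "g j = sgn (- A k (vs ! (j mod ?n)))" for j
  have n0: "?n > 0" using vs by simp
  have arc_sign: "cyclic_sign A (k # arc vs (q t) (q (Suc t))) =
      g (q t) * prod s {q t..<q (Suc t)} * g (q (Suc t))" for t
  proof -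
    have "vs ! (q (Suc t) mod ?n) \<in> set vs" using n0 by simp
    then have "sgn (- A (vs ! (q (Suc t) mod ?n)) k) = g (q (Suc t))"
      using sym unfolding g_def by (simp add: sgn_minus)
    moreover have "q t \<le> q (Suc t)" using q by (simp add: strict_mono_less_eq)
    ultimately show ?thesis unfolding cyclic_sign_cons_arc[OF \<open>q t \<le> q (Suc t)\<close>] s_def g_def
      by simp
  qed
  have involutive: "g (q t) * g (q t) = 1" for t
    using nonzero[of t] unfolding g_def by (simp add: sgn_if)
  have closed: "g (q M) = g (q 0)" using period[of 0] unfolding g_def by simp
  have periodic: "s (j + ?n) = s j" for j
    unfolding s_def by (metis add_Suc mod_add_self2)
  have "(\<Prod>t<M. cyclic_sign A (k # arc vs (q t) (q (Suc t)))) = prod s {q 0..<q M}"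
    unfolding arc_sign
    by (rule arc_factors_telescope[OF strict_mono_mono[OF q] involutive closed])
  also have "\<dots> = prod s {..<?n}" using period[of 0] prod_periodic_window[of s ?n, OF periodic] by simp
  also have "\<dots> = cyclic_sign A vs" unfolding cyclic_sign_def s_def by (rule prod.cong) auto
  finally show ?thesis .
qed

lemma positive_arc_cycle:
  assumes vs: "cycle_enum w vs" and C: "set vs = C" and k: "k \<notin> C" "w k k = 0"
    and sym: "\<And>x y. x \<in> insert k C \<Longrightarrow> y \<in> insert k C \<Longrightarrow> sgn (A x y) = sgn (A y x)"
    and nonzero: "\<And>v. v \<in> C \<Longrightarrow> adj w k v \<Longrightarrow> A k v \<noteq> 0"
    and neg: "cyclic_sign A vs = -1"
    and even_nb: "even (card {v \<in> C. adj w k v})"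
    and nonadj: "\<exists>u\<in>C. \<exists>v\<in>C. adj w k u \<and> adj w k v \<and> u \<noteq> v \<and> \<not> adj w u v"
  shows "\<exists>ws. cycle_enum w ws \<and> k \<in> set ws \<and> set ws \<subseteq> insert k C \<and>
    cyclic_sign A ws = 1"
proof -
  define M where "M = card {v \<in> set vs. adj w k v}"
  have vs_ne: "vs \<noteq> []" using vs unfolding cycle_enum_def by auto
  have "\<exists>v\<in>set vs. adj w k v" using nonadj C by blast
  then obtain q where q: "strict_mono q" "\<And>t. q (t + M) = q t + length vs"
      "range q = {x. adj w k (vs ! (x mod length vs))}"
    by (rule neighbour_enumeration[OF vs]) (auto simp: M_def)
  have gap: "q (Suc t) + 2 \<le> q t + length vs" for t
    by (rule neighbour_gap[OF vs q(1,3,2) M_def nonadj[folded C]])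
  define arcs where "arcs t = k # arc vs (q t) (q (Suc t))" for t
  have arc_cycles: "cycle_enum w (arcs t)" for t
    unfolding arcs_def by (rule neighbour_arc_cycle[OF vs k[folded C] q(1,3) gap])
  have "(\<Prod>t<M. cyclic_sign A (arcs t)) = cyclic_sign A vs"
    unfolding arcs_def
  proof (rule arc_signs_product[OF vs_ne q(1,2) sym[folded C]])
    show "A k (vs ! (q t mod length vs)) \<noteq> 0" for t
      using nonzero[folded C, OF cycle_enum_nth_mod[OF vs]] q(3) by blast
  qed
  then have "(\<Prod>t<M. cyclic_sign A (arcs t)) = -1" using neg by simp
  moreover have "even M" using even_nb unfolding M_def C .
  ultimately have "\<exists>t<M. cyclic_sign A (arcs t) = 1"
    by (intro even_sign_product[OF _ _ cyclic_sign_range])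
  then obtain t where positive: "cyclic_sign A (arcs t) = 1" by blast
  show ?thesis
  proof (intro exI conjI)
    show "cycle_enum w (arcs t)" by (fact arc_cycles)
    show "k \<in> set (arcs t)" unfolding arcs_def by simp
    show "set (arcs t) \<subseteq> insert k C"
      using set_arc_subset[OF vs_ne] C unfolding arcs_def by auto
    show "cyclic_sign A (arcs t) = 1" by (fact positive)
  qed
qed

theorem mainTheorem14:
  fixes C :: "'a set" and k :: 'a
    and w :: "'a \<Rightarrow> 'a \<Rightarrow> nat" and A :: "'a \<Rightarrow> 'a \<Rightarrow> int"
  assumes diag: "is_diagram (insert k C) w"
    and knew: "k \<notin> C"
    and cyc: "is_cycle w C"
    and comp: "quasi_cartan_companion (insert k C) w A"
    and neg: "cycle_prod w A C < 0"
    and even_nb: "even (card {v \<in> C. adj w k v})"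
    and nonadj: "\<exists>u\<in>C. \<exists>v\<in>C. adj w k u \<and> adj w k v \<and> u \<noteq> v \<and> \<not> adj w u v"
  shows "\<exists>C'. C' \<subseteq> insert k C \<and> k \<in> C' \<and> is_cycle w C' \<and> cycle_prod w A C' > 0"
proof -
  obtain vs where vs: "cycle_enum w vs" and C: "set vs = C" using cyc by (auto simp: is_cycle_iff_enum)
  have no2: "\<forall>i j. \<not> (w i j > 0 \<and> w j i > 0)" and wkk: "w k k = 0"
    using diag unfolding is_diagram_def by auto
  have "quasi_cartan (insert k C) A" using comp unfolding quasi_cartan_companion_def by blast
  note sym = quasi_cartan_sgn_sym[OF this]
  have sgn_cycle: "sgn (cycle_prod w A (set ws)) = cyclic_sign A ws"
    if "cycle_enum w ws" "set ws \<subseteq> insert k C" for ws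
    by (rule cycle_prod_sgn[OF no2 that(1)]) (meson sym that(2) subsetD)
  have "set vs \<subseteq> insert k C" using C by blast
  then have neg_vs: "cyclic_sign A vs = -1" using sgn_cycle[OF vs] neg C by simp
  have nonzero: "A k v \<noteq> 0" if "v \<in> C" "adj w k v" for v
    using companion_adj_nonzero[OF comp] that by simp
  obtain ws where ws: "cycle_enum w ws" "k \<in> set ws" "set ws \<subseteq> insert k C"
      and positive: "cyclic_sign A ws = 1"
    using positive_arc_cycle[where A = A, OF vs C knew wkk sym nonzero neg_vs even_nb nonadj]
    by blast
  show ?thesis
  proof (intro exI conjI)
    show "set ws \<subseteq> insert k C" "k \<in> set ws" by (fact ws(3), fact ws(2))
    show "is_cycle w (set ws)" unfolding is_cycle_iff_enum using ws(1) by blast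
    show "cycle_prod w A (set ws) > 0" using sgn_cycle[OF ws(1,3)] positive by (simp add: sgn_1_pos)
  qed
qed

end
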